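(* Let $\rho>0$, $\alpha\in(0,1/2)$, and for every $\rho'>0$ let $(P^{\rho'}_t)_{t\ge0}$ be the semigroup of the sticky Brownian motion of stickiness parameter $\rho'$. For each real-valued function $h$ and $x\in\mathbb{R}$ define $$T_n[h](x)=\int_0^1\Big(P^{n^{\alpha}\rho}_{n^{2\alpha}s/n}h(x)-h(x)\Big)\,ds.$$ Let $T:\mathbb{R}\to\mathbb{R}$ be continuously differentiable with, for some $\epsilon>0$, $T(0)=0$, $T'(0)=1$, $\epsilon\le T'(x)\le1/\epsilon$, $|T''(x)|\le1/\epsilon$ for all $x$. Then for every bounded integrable Lipschitz function $k$ that vanishes on an open interval around $0$, $$\lambda\big(|T_n[k_n]|\big)\longrightarrow0\qquad(n\to\infty),$$ where $k_n(x)=k\big(n^{\alpha}T(x/n^{\alpha})\big)$ and $\lambda(f)=\int_{\mathbb{R}}f(y)dy$.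
   Context: The sticky Brownian motion of stickiness parameter $\rho'$ is the one-dimensional diffusion on $\mathbb{R}$ with scale function $s(x)=x$ and speed measure $m(dx)=2\,dx+\rho'\,\delta_0(dx)$; its semigroup is $P^{\rho'}_t h(x)=\mathbb{E}_x[h(X_t)]$ with $X_0=x$ under $\mathbb{P}_x$. *)

theory Defs
  imports "HOL-Analysis.Analysis" "HOL-Probability.Probability"
begin

text \<open>Green function (w.r.t. the speed measure) of the one-dimensional diffusion with
scale function s(x) = x and speed measure m(dx) = 2 dx + r delta_0(dx), for spectral
parameter l > 0: G(x,y) = psi(min x y) phi(max x y) / W, where phi (decreasing) and
psi (increasing) solve d/dm d/ds u = l u, i.e. u'' = 2 l u off 0 and
u'(0+) - u'(0-) = l r u(0), and W = psi' phi - psi phi' is their Wronskian.\<close>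

definition sticky_green :: "real \<Rightarrow> real \<Rightarrow> real \<Rightarrow> real \<Rightarrow> real" where
  "sticky_green r l x y =
     (let g = sqrt (2 * l);
          A = 1 + l * r / (2 * g);
          B = - (l * r / (2 * g));
          phi = (\<lambda>z. if 0 \<le> z then exp (- (g * z)) else A * exp (- (g * z)) + B * exp (g * z));
          psi = (\<lambda>z. phi (- z))
      in psi (min x y) * phi (max x y) / (2 * g + l * r))"

text \<open>K r t x is the law of X_t under P_x for the sticky Brownian motion of stickiness r.
The family is characterised as the diffusion with the above scale and speed: the
transition kernels are probability measures, t \<mapsto> P_t h(x) is continuous on [0,\<infinity>)
for bounded continuous h, and its Laplace transform is the resolvent
R_l h(x) = \<integral> G_l(x,y) h(y) m(dy) with m = 2 dx + r delta_0.\<close>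

definition sticky_kernels :: "(real \<Rightarrow> real \<Rightarrow> real \<Rightarrow> real measure) \<Rightarrow> bool" where
  "sticky_kernels K \<longleftrightarrow>
     (\<forall>r>0. \<forall>t\<ge>0. \<forall>x. prob_space (K r t x) \<and> sets (K r t x) = sets borel) \<and>
     (\<forall>r>0. \<forall>x. \<forall>h::real \<Rightarrow> real. continuous_on UNIV h \<and> bounded (range h) \<longrightarrow>
        continuous_on {0..} (\<lambda>t. \<integral>y. h y \<partial>(K r t x)) \<and>
        (\<forall>l>0. (LBINT t:{0..}. exp (- (l * t)) * (\<integral>y. h y \<partial>(K r t x))) =
                2 * (LBINT y. sticky_green r l x y * h y) + r * sticky_green r l x 0 * h 0))"

definition sticky_P :: "(real \<Rightarrow> real \<Rightarrow> real \<Rightarrow> real measure) \<Rightarrow> real \<Rightarrow> real \<Rightarrow> (real \<Rightarrow> real) \<Rightarrow> real \<Rightarrow> real" where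
  "sticky_P K r t h x = (\<integral>y. h y \<partial>(K r t x))"

definition T_op :: "(real \<Rightarrow> real \<Rightarrow> real \<Rightarrow> real measure) \<Rightarrow> real \<Rightarrow> real \<Rightarrow> nat \<Rightarrow> (real \<Rightarrow> real) \<Rightarrow> real \<Rightarrow> real" where
  "T_op K \<rho> \<alpha> n h x =
     (LBINT s=0..1. sticky_P K (real n powr \<alpha> * \<rho>) (real n powr (2 * \<alpha>) * s / real n) h x - h x)"

end

theory Submission
  imports Defs
begin

(*
  Write h = k_n and tau = n^(2 alpha) / n, so that T_n[h](x) is the average of
  P_(tau s) h(x) - h(x) over s in [0,1].  Since 1 <= e^(1-s) there, this average is at most
  e / tau times the Laplace transform at 1/tau of t |-> E_x |h(X_t) - h(x)|, i.e. a resolvent.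
  With g = sqrt (2 / tau), the Green function of the sticky motion is dominated by the
  Laplace kernel e^(-g |x-y|) / (2 g), and the atom of the speed measure at 0 contributes at
  most e^(-g |x|) |h(x)| because h(0) = 0.  Integrating in x, the first part is controlled by
  the L^1 modulus of continuity of h, which for Lipschitz integrable h is O(|z|) up to the
  L^1 mass of h away from the origin, and the second part is O(1 / g^2) because h vanishes
  near 0.  Since eps <= T' <= 1 / eps, the Lipschitz constant, the L^1 norm, the vanishing
  interval and the L^1 tails of k_n are controlled by those of k uniformly in n, and
  g -> infinity because alpha < 1/2.
*)

section \<open>Integrals on the real line\<close>

lemma norm_integral_le_nn_integral_norm:
  fixes f :: "'a \<Rightarrow> 'b::{banach, second_countable_topology}"
  shows "ennreal (norm (integral\<^sup>L M f)) \<le> (\<integral>\<^sup>+x. norm (f x) \<partial>M)"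
  by (cases "integrable M f") (simp_all add: integral_norm_bound_ennreal not_integrable_integral_eq)

lemma nn_integral_comp_abs_le:
  fixes F :: "real \<Rightarrow> ennreal"
  assumes [measurable]: "F \<in> borel_measurable borel"
  shows "(\<integral>\<^sup>+z. F \<bar>z\<bar> \<partial>lborel) \<le> 2 * (\<integral>\<^sup>+z. F z * indicator {0..} z \<partial>lborel)"
proof -
  have "(\<integral>\<^sup>+z. F \<bar>z\<bar> \<partial>lborel)
      \<le> (\<integral>\<^sup>+z. F z * indicator {0..} z + F (- z) * indicator {0..} (- z) \<partial>lborel)"
    by (intro nn_integral_mono) (auto split: split_indicator)
  also have "\<dots> = (\<integral>\<^sup>+z. F z * indicator {0..} z \<partial>lborel) + (\<integral>\<^sup>+z. F (- z) * indicator {0..} (- z) \<partial>lborel)"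
    by (intro nn_integral_add) auto
  also have "(\<integral>\<^sup>+z. F (- z) * indicator {0..} (- z) \<partial>lborel) = (\<integral>\<^sup>+z. F z * indicator {0..} z \<partial>lborel)"
    using nn_integral_real_affine[of "\<lambda>z. F z * indicator {0..} z" "-1" 0] by simp
  finally show ?thesis by (simp add: mult_2)
qed

lemma nn_integral_exp_abs_moment_le:
  fixes g :: real and i :: nat
  assumes g: "g > 0"
  shows "(\<integral>\<^sup>+z. ennreal (exp (- (g * \<bar>z\<bar>)) * \<bar>z\<bar> ^ i) \<partial>lborel) \<le> ennreal (2 * fact i / g ^ Suc i)"
proof -
  have "(\<integral>\<^sup>+z. ennreal (exp (- (g * \<bar>z\<bar>)) * \<bar>z\<bar> ^ i) \<partial>lborel)
      \<le> 2 * (\<integral>\<^sup>+z. ennreal (exp (- (g * \<bar>z\<bar>)) * \<bar>z\<bar> ^ i) * indicator {0..} z \<partial>lborel)"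
    using nn_integral_comp_abs_le[of "\<lambda>z. ennreal (exp (- (g * \<bar>z\<bar>)) * \<bar>z\<bar> ^ i)"] by simp
  also have "(\<integral>\<^sup>+z. ennreal (exp (- (g * \<bar>z\<bar>)) * \<bar>z\<bar> ^ i) * indicator {0..} z \<partial>lborel)
      = (\<integral>\<^sup>+z. ennreal (1 / g) * ennreal (erlang_density 0 g z * z ^ i) \<partial>lborel)"
    using g by (intro nn_integral_cong)
      (auto simp: erlang_density_def ennreal_mult'[symmetric] split: split_indicator)
  also have "\<dots> = ennreal (1 / g) * ennreal (fact i / g ^ i)"
    using g by (subst nn_integral_cmult) (auto simp: nn_integral_erlang_ith_moment)
  also have "\<dots> = ennreal (fact i / g ^ Suc i)"
    using g by (simp add: ennreal_mult[symmetric])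
  also have "2 * \<dots> = ennreal (2 * fact i / g ^ Suc i)"
    using ennreal_mult'[of 2 "fact i / g ^ Suc i"] by (simp del: power_Suc)
  finally show ?thesis .
qed

lemma integrable_exp_abs:
  fixes g :: real
  assumes g: "g > 0"
  shows "integrable lborel (\<lambda>t. exp (- (g * \<bar>t\<bar>)))"
proof (rule integrableI_nonneg)
  show "(\<integral>\<^sup>+t. ennreal (exp (- (g * \<bar>t\<bar>))) \<partial>lborel) < \<infinity>"
    using nn_integral_exp_abs_moment_le[OF g, of 0] by (simp add: top.not_eq_extremum order_le_less_trans)
qed auto

lemma DERIV_ge_imp_diff_ge:
  fixes S S' :: "real \<Rightarrow> real"
  assumes S: "\<And>x. (S has_real_derivative S' x) (at x)" and S'_ge: "\<And>x. c \<le> S' x" and "x \<le> y"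
  shows "c * (y - x) \<le> S y - S x"
proof (cases "x = y")
  case False
  with \<open>x \<le> y\<close> have "x < y" by simp
  from MVT2[OF this S] obtain z where "S y - S x = (y - x) * S' z" by blast
  then show ?thesis using mult_right_mono[OF S'_ge[of z], of "y - x"] \<open>x \<le> y\<close> by (simp add: mult.commute)
qed simp

lemma DERIV_abs_le_imp_abs_diff_le:
  fixes S S' :: "real \<Rightarrow> real"
  assumes S: "\<And>x. (S has_real_derivative S' x) (at x)" and S'_le: "\<And>x. \<bar>S' x\<bar> \<le> C"
  shows "\<bar>S y - S x\<bar> \<le> C * \<bar>y - x\<bar>"
proof -
  have "- C \<le> S' z" and "- C \<le> - S' z" for z using S'_le[of z] by (simp_all add: abs_le_iff)
  note lower = DERIV_ge_imp_diff_ge[OF S this(1)] DERIV_ge_imp_diff_ge[OF DERIV_minus[OF S] this(2)]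
  have "\<bar>S v - S u\<bar> \<le> C * (v - u)" if "u \<le> v" for u v
    using lower[OF that] by (simp add: abs_le_iff algebra_simps)
  from this[of x y] this[of y x] show ?thesis
    by (cases "x \<le> y") (simp_all add: abs_minus_commute[of "S y"] abs_minus_commute[of y])
qed

lemma nn_integral_comp_indicator_le_of_DERIV_ge:
  fixes S S' :: "real \<Rightarrow> real" and F :: "real \<Rightarrow> ennreal"
  assumes S: "\<And>x. (S has_real_derivative S' x) (at x)" and S'_cont: "continuous_on UNIV S'"
    and S'_ge: "\<And>x. e \<le> S' x" and e: "e > 0"
    and [measurable]: "F \<in> borel_measurable borel" and "a < b"
  shows "(\<integral>\<^sup>+x. F (S x) * indicator {a..b} x \<partial>lborel) \<le> ennreal (1 / e) * (\<integral>\<^sup>+u. F u \<partial>lborel)"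
proof -
  have [measurable]: "S \<in> borel_measurable borel"
    using S by (intro borel_measurable_continuous_onI has_real_derivative_imp_continuous_on)
  have [measurable]: "S' \<in> borel_measurable borel"
    using S'_cont by (rule borel_measurable_continuous_onI)
  have "(\<integral>\<^sup>+x. F (S x) * indicator {a..b} x \<partial>lborel)
      \<le> (\<integral>\<^sup>+x. ennreal (1 / e) * (F (S x) * ennreal (S' x) * indicator {a..b} x) \<partial>lborel)"
  proof (intro nn_integral_mono)
    fix x
    have "1 \<le> 1 / e * S' x" using S'_ge[of x] e by (simp add: field_simps)
    then have "1 \<le> ennreal (1 / e) * ennreal (S' x)"
      using e S'_ge[of x] by (simp add: ennreal_mult[symmetric] ennreal_leI del: ennreal_1)
    then have "F (S x) * 1 \<le> F (S x) * (ennreal (1 / e) * ennreal (S' x))"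
      by (rule mult_left_mono) simp
    then show "F (S x) * indicator {a..b} x \<le> ennreal (1 / e) * (F (S x) * ennreal (S' x) * indicator {a..b} x)"
      by (simp add: mult_ac split: split_indicator)
  qed
  also have "\<dots> = ennreal (1 / e) * (\<integral>\<^sup>+x. F (S x) * ennreal (S' x) * indicator {a..b} x \<partial>lborel)"
    by (rule nn_integral_cmult) measurable
  also have "(\<integral>\<^sup>+x. F (S x) * ennreal (S' x) * indicator {a..b} x \<partial>lborel)
      = (\<integral>\<^sup>+u. F u * indicator {S a..S b} u \<partial>lborel)"
    using S'_ge e \<open>a < b\<close>
    by (intro nn_integral_substitution_aux[symmetric] S continuous_on_subset[OF S'_cont])
      (auto intro: order.trans[OF less_imp_le[OF e]])
  also have "\<dots> \<le> (\<integral>\<^sup>+u. F u \<partial>lborel)"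
    by (intro nn_integral_mono) (simp split: split_indicator)
  finally show ?thesis by (simp add: mult_left_mono)
qed

lemma nn_integral_comp_le_of_DERIV_ge:
  fixes S S' :: "real \<Rightarrow> real" and F :: "real \<Rightarrow> ennreal"
  assumes S: "\<And>x. (S has_real_derivative S' x) (at x)" and S'_cont: "continuous_on UNIV S'"
    and S'_ge: "\<And>x. e \<le> S' x" and e: "e > 0"
    and [measurable]: "F \<in> borel_measurable borel"
  shows "(\<integral>\<^sup>+x. F (S x) \<partial>lborel) \<le> ennreal (1 / e) * (\<integral>\<^sup>+u. F u \<partial>lborel)"
proof -
  have [measurable]: "S \<in> borel_measurable borel"
    using S by (intro borel_measurable_continuous_onI has_real_derivative_imp_continuous_on)
  define I where "I m = {- real m - 1..real m + 1}" for m :: nat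
  have "(\<lambda>m. \<integral>\<^sup>+x. F (S x) * indicator (I m) x \<partial>lborel) \<longlonglongrightarrow> (\<integral>\<^sup>+x. F (S x) \<partial>lborel)"
  proof (rule nn_integral_LIMSEQ)
    show "incseq (\<lambda>m x. F (S x) * indicator (I m) x)"
      by (intro incseq_SucI le_funI mult_left_mono) (auto simp: I_def split: split_indicator)
    show "(\<lambda>x. F (S x) * indicator (I m) x) \<in> borel_measurable lborel" for m
      unfolding I_def by measurable
    show "(\<lambda>m. F (S x) * indicator (I m) x) \<longlonglongrightarrow> F (S x)" for x
    proof (rule tendsto_eventually)
      obtain N :: nat where "\<bar>x\<bar> \<le> real N" using real_arch_simple by blast
      then show "\<forall>\<^sub>F m in sequentially. F (S x) * indicator (I m) x = F (S x)"
        unfolding eventually_sequentially I_def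
        by (intro exI[of _ N]) (auto split: split_indicator)
    qed
  qed
  moreover have "(\<integral>\<^sup>+x. F (S x) * indicator (I m) x \<partial>lborel) \<le> ennreal (1 / e) * (\<integral>\<^sup>+u. F u \<partial>lborel)" for m
    unfolding I_def by (rule nn_integral_comp_indicator_le_of_DERIV_ge[OF S S'_cont S'_ge e]) auto
  ultimately show ?thesis by (intro LIMSEQ_le_const2) auto
qed

definition L1_tail :: "(real \<Rightarrow> real) \<Rightarrow> real \<Rightarrow> ennreal" where
  "L1_tail f a = (\<integral>\<^sup>+x. ennreal \<bar>f x\<bar> * indicator {x. a \<le> \<bar>x\<bar>} x \<partial>lborel)"

lemma sets_borel_abs_ge [measurable]: "{x::real. a \<le> \<bar>x\<bar>} \<in> sets borel"
  by (intro borel_closed closed_Collect_le continuous_intros)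

lemma L1_tail_comp_le:
  fixes S S' k :: "real \<Rightarrow> real"
  assumes S: "\<And>x. (S has_real_derivative S' x) (at x)" and S'_cont: "continuous_on UNIV S'"
    and S'_ge: "\<And>x. e \<le> S' x" and e: "e > 0" and S0: "S 0 = 0"
    and [measurable]: "k \<in> borel_measurable borel"
  shows "L1_tail (\<lambda>x. k (S x)) a \<le> ennreal (1 / e) * L1_tail k (e * a)"
proof -
  have S_ge: "e * \<bar>x\<bar> \<le> \<bar>S x\<bar>" for x
    using DERIV_ge_imp_diff_ge[OF S S'_ge, of 0 x] DERIV_ge_imp_diff_ge[OF S S'_ge, of x 0] S0
    by (cases "0 \<le> x") auto
  have "L1_tail (\<lambda>x. k (S x)) a
      \<le> (\<integral>\<^sup>+x. ennreal \<bar>k (S x)\<bar> * indicator {u. e * a \<le> \<bar>u\<bar>} (S x) \<partial>lborel)"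
    unfolding L1_tail_def
  proof (intro nn_integral_mono)
    fix x
    have "a \<le> \<bar>x\<bar> \<Longrightarrow> e * a \<le> \<bar>S x\<bar>" using S_ge[of x] e by (smt (verit) mult_left_mono)
    then show "ennreal \<bar>k (S x)\<bar> * indicator {x. a \<le> \<bar>x\<bar>} x
        \<le> ennreal \<bar>k (S x)\<bar> * indicator {u. e * a \<le> \<bar>u\<bar>} (S x)"
      by (simp split: split_indicator)
  qed
  also have "\<dots> \<le> ennreal (1 / e) * L1_tail k (e * a)"
    unfolding L1_tail_def by (rule nn_integral_comp_le_of_DERIV_ge[OF S S'_cont S'_ge e]) measurable
  finally show ?thesis .
qed

lemma L1_tail_tendsto_0:
  fixes k :: "real \<Rightarrow> real"
  assumes k: "integrable lborel k"
  shows "(\<lambda>m::nat. L1_tail k (real m)) \<longlonglongrightarrow> 0"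
proof -
  have [measurable]: "k \<in> borel_measurable borel" using k by auto
  have "(\<lambda>m. \<integral>\<^sup>+x. ennreal (norm (0 - \<bar>k x\<bar> * indicator {x. real m \<le> \<bar>x\<bar>} x)) \<partial>lborel) \<longlonglongrightarrow> 0"
  proof (rule nn_integral_dominated_convergence_norm[where w="\<lambda>x. \<bar>k x\<bar>"])
    show "(\<integral>\<^sup>+x. ennreal \<bar>k x\<bar> \<partial>lborel) < \<infinity>"
      using integrableD(2)[OF integrable_abs[OF k]] by (simp add: top.not_eq_extremum)
    show "AE x in lborel. (\<lambda>m. \<bar>k x\<bar> * indicator {x. real m \<le> \<bar>x\<bar>} x) \<longlonglongrightarrow> 0"
    proof (intro AE_I2 tendsto_eventually)
      fix x :: real
      obtain N :: nat where "\<bar>x\<bar> < real N" using reals_Archimedean2 by blast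
      then show "\<forall>\<^sub>F m in sequentially. \<bar>k x\<bar> * indicator {x. real m \<le> \<bar>x\<bar>} x = 0"
        unfolding eventually_sequentially
        by (intro exI[of _ N]) (auto split: split_indicator dest: of_nat_mono[where 'a=real])
    qed
  qed (auto split: split_indicator)
  then show ?thesis
    unfolding L1_tail_def by (simp add: abs_mult ennreal_mult' ennreal_indicator)
qed

lemma nn_integral_lborel_shift:
  fixes f :: "real \<Rightarrow> ennreal"
  assumes [measurable]: "f \<in> borel_measurable borel"
  shows "(\<integral>\<^sup>+x. f (x + z) \<partial>lborel) = (\<integral>\<^sup>+x. f x \<partial>lborel)"
  using nn_integral_real_affine[of f 1 z] by (simp add: add.commute)

lemma nn_integral_small_shift_diff_le:
  fixes h :: "real \<Rightarrow> real"
  assumes [measurable]: "h \<in> borel_measurable borel" and h_lip: "L-lipschitz_on UNIV h"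
    and z: "\<bar>z\<bar> \<le> R / 2"
  shows "(\<integral>\<^sup>+x. ennreal \<bar>h (x + z) - h x\<bar> \<partial>lborel) \<le> ennreal (2 * R * L * \<bar>z\<bar>) + 2 * L1_tail h (R / 2)"
proof -
  define H where "H x = ennreal \<bar>h x\<bar> * indicator {x. R / 2 \<le> \<bar>x\<bar>} x" for x
  have [measurable]: "H \<in> borel_measurable borel" unfolding H_def by measurable
  have H_tail: "(\<integral>\<^sup>+x. H x \<partial>lborel) = L1_tail h (R / 2)" by (simp add: L1_tail_def H_def)
  have L: "L \<ge> 0" and R: "R \<ge> 0" using lipschitz_on_nonneg[OF h_lip] z by simp_all
  have "(\<integral>\<^sup>+x. ennreal \<bar>h (x + z) - h x\<bar> \<partial>lborel)
      \<le> (\<integral>\<^sup>+x. ennreal (L * \<bar>z\<bar>) * indicator {-R..R} x + (H (x + z) + H x) \<partial>lborel)"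
  proof (intro nn_integral_mono)
    fix x
    show "ennreal \<bar>h (x + z) - h x\<bar> \<le> ennreal (L * \<bar>z\<bar>) * indicator {-R..R} x + (H (x + z) + H x)"
    proof (cases "\<bar>x\<bar> \<le> R")
      case True
      have "\<bar>h (x + z) - h x\<bar> \<le> L * \<bar>z\<bar>"
        using lipschitz_onD[OF h_lip, of "x + z" x] by (simp add: dist_real_def)
      then have "ennreal \<bar>h (x + z) - h x\<bar> \<le> ennreal (L * \<bar>z\<bar>) * indicator {-R..R} x"
        using True by (simp add: abs_le_iff ennreal_leI)
      then show ?thesis by (rule order.trans) simp
    next
      case False
      moreover have "\<bar>x\<bar> \<le> \<bar>x + z\<bar> + \<bar>z\<bar>" using abs_triangle_ineq[of "x + z" "- z"] by simp
      ultimately have "R / 2 \<le> \<bar>x + z\<bar>" "R / 2 \<le> \<bar>x\<bar>" using z by linarith+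
      then have "H (x + z) + H x = ennreal (\<bar>h (x + z)\<bar> + \<bar>h x\<bar>)"
        by (simp add: H_def ennreal_plus)
      moreover have "ennreal \<bar>h (x + z) - h x\<bar> \<le> ennreal (\<bar>h (x + z)\<bar> + \<bar>h x\<bar>)"
        by (intro ennreal_leI abs_triangle_ineq4)
      ultimately show ?thesis by (simp add: add_increasing)
    qed
  qed
  also have "\<dots> = ennreal (L * \<bar>z\<bar>) * ennreal (2 * R) + (L1_tail h (R / 2) + L1_tail h (R / 2))"
    using R by (simp add: nn_integral_add nn_integral_cmult_indicator nn_integral_lborel_shift H_tail)
  also have "\<dots> = ennreal (2 * R * L * \<bar>z\<bar>) + 2 * L1_tail h (R / 2)"
    using R L by (simp add: ennreal_mult[symmetric] mult_2 mult_ac)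
  finally show ?thesis .
qed

lemma nn_integral_shift_diff_le:
  fixes h :: "real \<Rightarrow> real"
  assumes [measurable]: "h \<in> borel_measurable borel" and h_lip: "L-lipschitz_on UNIV h"
    and h_L1: "(\<integral>\<^sup>+x. ennreal \<bar>h x\<bar> \<partial>lborel) \<le> ennreal M" and M: "M \<ge> 0" and R: "R > 0"
  shows "(\<integral>\<^sup>+x. ennreal \<bar>h (x + z) - h x\<bar> \<partial>lborel)
    \<le> ennreal ((2 * R * L + 4 * M / R) * \<bar>z\<bar>) + 2 * L1_tail h (R / 2)"
proof (cases "\<bar>z\<bar> \<le> R / 2")
  case True
  have "2 * R * L * \<bar>z\<bar> \<le> (2 * R * L + 4 * M / R) * \<bar>z\<bar>"
    using R M by (intro mult_right_mono) auto
  then show ?thesis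
    by (intro order.trans[OF nn_integral_small_shift_diff_le[OF _ h_lip True]] add_mono ennreal_leI) auto
next
  case False
  have "(\<integral>\<^sup>+x. ennreal \<bar>h (x + z) - h x\<bar> \<partial>lborel) \<le> (\<integral>\<^sup>+x. ennreal \<bar>h (x + z)\<bar> + ennreal \<bar>h x\<bar> \<partial>lborel)"
    by (intro nn_integral_mono) (simp add: ennreal_plus[symmetric] ennreal_leI abs_triangle_ineq4 del: ennreal_plus)
  also have "\<dots> = 2 * (\<integral>\<^sup>+x. ennreal \<bar>h x\<bar> \<partial>lborel)"
    by (simp add: nn_integral_add nn_integral_lborel_shift[of "\<lambda>x. ennreal \<bar>h x\<bar>"] mult_2)
  also have "\<dots> \<le> ennreal (2 * M)"
    using h_L1 M by (simp add: ennreal_mult' mult_left_mono)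
  also have "\<dots> \<le> ennreal ((2 * R * L + 4 * M / R) * \<bar>z\<bar>)"
  proof (intro ennreal_leI)
    have "2 * M = 4 * M / R * (R / 2)" using R by simp
    also have "\<dots> \<le> 4 * M / R * \<bar>z\<bar>" using False M R by (intro mult_left_mono) auto
    also have "\<dots> \<le> (2 * R * L + 4 * M / R) * \<bar>z\<bar>"
      using R lipschitz_on_nonneg[OF h_lip] by (intro mult_right_mono) auto
    finally show "2 * M \<le> (2 * R * L + 4 * M / R) * \<bar>z\<bar>" .
  qed
  finally show ?thesis by (rule order.trans) simp
qed

lemma nn_integral_laplace_kernel_le:
  fixes C g :: real and D :: ennreal
  assumes C: "C \<ge> 0" and g: "g > 0"
  shows "(\<integral>\<^sup>+z. ennreal (g / 2 * exp (- (g * \<bar>z\<bar>))) * (ennreal (C * \<bar>z\<bar>) + D) \<partial>lborel) \<le> ennreal (C / g) + D"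
proof -
  have "(\<integral>\<^sup>+z. ennreal (g / 2 * exp (- (g * \<bar>z\<bar>))) * (ennreal (C * \<bar>z\<bar>) + D) \<partial>lborel)
      = (\<integral>\<^sup>+z. ennreal (g / 2 * C) * ennreal (exp (- (g * \<bar>z\<bar>)) * \<bar>z\<bar>)
        + D * ennreal (g / 2 * exp (- (g * \<bar>z\<bar>))) \<partial>lborel)"
  proof (intro nn_integral_cong)
    fix z
    have "ennreal (g / 2 * exp (- (g * \<bar>z\<bar>))) * ennreal (C * \<bar>z\<bar>)
        = ennreal (g / 2 * C) * ennreal (exp (- (g * \<bar>z\<bar>)) * \<bar>z\<bar>)"
      using g C by (simp add: ennreal_mult[symmetric] mult_ac)
    then show "ennreal (g / 2 * exp (- (g * \<bar>z\<bar>))) * (ennreal (C * \<bar>z\<bar>) + D)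
        = ennreal (g / 2 * C) * ennreal (exp (- (g * \<bar>z\<bar>)) * \<bar>z\<bar>) + D * ennreal (g / 2 * exp (- (g * \<bar>z\<bar>)))"
      by (simp only: distrib_left mult.commute[of "ennreal (g / 2 * exp (- (g * \<bar>z\<bar>)))" D])
  qed
  also have "\<dots> = ennreal (g / 2 * C) * (\<integral>\<^sup>+z. ennreal (exp (- (g * \<bar>z\<bar>)) * \<bar>z\<bar>) \<partial>lborel)
      + D * (ennreal (g / 2) * (\<integral>\<^sup>+z. ennreal (exp (- (g * \<bar>z\<bar>))) \<partial>lborel))"
    using g by (simp add: nn_integral_add nn_integral_cmult[symmetric] ennreal_mult[symmetric])
  also have "\<dots> \<le> ennreal (g / 2 * C) * ennreal (2 / g ^ 2) + D * (ennreal (g / 2) * ennreal (2 / g))"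
    using nn_integral_exp_abs_moment_le[OF g, of 1] nn_integral_exp_abs_moment_le[OF g, of 0]
    by (intro add_mono mult_left_mono) (simp_all add: power2_eq_square)
  also have "\<dots> = ennreal (C / g) + D"
    using g C by (simp add: ennreal_mult[symmetric] power2_eq_square)
  finally show ?thesis .
qed

lemma nn_integral_laplace_smoothing_diff_le:
  fixes h :: "real \<Rightarrow> real"
  assumes [measurable]: "h \<in> borel_measurable borel"
    and shift: "\<And>z. (\<integral>\<^sup>+x. ennreal \<bar>h (x + z) - h x\<bar> \<partial>lborel) \<le> ennreal (C * \<bar>z\<bar>) + D"
    and C: "C \<ge> 0" and g: "g > 0"
  shows "(\<integral>\<^sup>+x. \<integral>\<^sup>+y. ennreal (g / 2 * exp (- (g * \<bar>x - y\<bar>)) * \<bar>h y - h x\<bar>) \<partial>lborel \<partial>lborel)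
    \<le> ennreal (C / g) + D"
proof -
  define \<Psi> where "\<Psi> x z = ennreal (g / 2 * exp (- (g * \<bar>z\<bar>)) * \<bar>h (x + z) - h x\<bar>)" for x z
  have [measurable]: "case_prod \<Psi> \<in> borel_measurable (lborel \<Otimes>\<^sub>M lborel)"
    unfolding \<Psi>_def by measurable
  have "(\<integral>\<^sup>+x. \<integral>\<^sup>+y. ennreal (g / 2 * exp (- (g * \<bar>x - y\<bar>)) * \<bar>h y - h x\<bar>) \<partial>lborel \<partial>lborel)
      = (\<integral>\<^sup>+x. \<integral>\<^sup>+z. \<Psi> x z \<partial>lborel \<partial>lborel)"
  proof (rule nn_integral_cong)
    fix x
    show "(\<integral>\<^sup>+y. ennreal (g / 2 * exp (- (g * \<bar>x - y\<bar>)) * \<bar>h y - h x\<bar>) \<partial>lborel) = (\<integral>\<^sup>+z. \<Psi> x z \<partial>lborel)"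
      using nn_integral_real_affine[of "\<lambda>y. ennreal (g / 2 * exp (- (g * \<bar>x - y\<bar>)) * \<bar>h y - h x\<bar>)" 1 x]
      by (simp add: \<Psi>_def)
  qed
  also have "\<dots> = (\<integral>\<^sup>+z. \<integral>\<^sup>+x. \<Psi> x z \<partial>lborel \<partial>lborel)"
    by (rule lborel_pair.Fubini'[symmetric]) measurable
  also have "\<dots> \<le> (\<integral>\<^sup>+z. ennreal (g / 2 * exp (- (g * \<bar>z\<bar>))) * (ennreal (C * \<bar>z\<bar>) + D) \<partial>lborel)"
  proof (intro nn_integral_mono)
    fix z
    have "\<Psi> x z = ennreal (g / 2 * exp (- (g * \<bar>z\<bar>))) * ennreal \<bar>h (x + z) - h x\<bar>" for x
      unfolding \<Psi>_def by (rule ennreal_mult') (use g in simp)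
    then have "(\<integral>\<^sup>+x. \<Psi> x z \<partial>lborel)
        = ennreal (g / 2 * exp (- (g * \<bar>z\<bar>))) * (\<integral>\<^sup>+x. ennreal \<bar>h (x + z) - h x\<bar> \<partial>lborel)"
      by (simp add: nn_integral_cmult)
    then show "(\<integral>\<^sup>+x. \<Psi> x z \<partial>lborel) \<le> ennreal (g / 2 * exp (- (g * \<bar>z\<bar>))) * (ennreal (C * \<bar>z\<bar>) + D)"
      using shift[of z] by (simp add: mult_left_mono)
  qed
  also have "\<dots> \<le> ennreal (C / g) + D"
    by (rule nn_integral_laplace_kernel_le[OF C g])
  finally show ?thesis .
qed

lemma nn_integral_exp_abs_mult_le:
  fixes h :: "real \<Rightarrow> real"
  assumes h_le: "\<And>x. \<bar>h x\<bar> \<le> B" and h_zero: "\<And>x. \<bar>x\<bar> < c \<Longrightarrow> h x = 0" and c: "c > 0" and g: "g > 0"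
  shows "(\<integral>\<^sup>+x. ennreal (exp (- (g * \<bar>x\<bar>)) * \<bar>h x\<bar>) \<partial>lborel) \<le> ennreal (2 * B / (c * g ^ 2))"
proof -
  have B: "B \<ge> 0" using h_le[of 0] by simp
  have "\<bar>h x\<bar> \<le> B / c * \<bar>x\<bar>" for x
  proof (cases "\<bar>x\<bar> < c")
    case False
    then have "B \<le> B / c * \<bar>x\<bar>" using B c by (simp add: field_simps mult_left_mono)
    then show ?thesis using h_le[of x] by linarith
  qed (use h_zero B c in simp)
  have "exp (- (g * \<bar>x\<bar>)) * \<bar>h x\<bar> \<le> B / c * (exp (- (g * \<bar>x\<bar>)) * \<bar>x\<bar> ^ 1)" for x
    using mult_left_mono[OF \<open>\<bar>h x\<bar> \<le> B / c * \<bar>x\<bar>\<close>, of "exp (- (g * \<bar>x\<bar>))"] by (simp add: mult_ac)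
  then have "(\<integral>\<^sup>+x. ennreal (exp (- (g * \<bar>x\<bar>)) * \<bar>h x\<bar>) \<partial>lborel)
      \<le> (\<integral>\<^sup>+x. ennreal (B / c) * ennreal (exp (- (g * \<bar>x\<bar>)) * \<bar>x\<bar> ^ 1) \<partial>lborel)"
    using B c by (intro nn_integral_mono) (simp add: ennreal_mult[symmetric] ennreal_leI del: power_one_right)
  also have "\<dots> \<le> ennreal (B / c) * ennreal (2 / g ^ 2)"
    using nn_integral_exp_abs_moment_le[OF g, of 1]
    by (simp add: nn_integral_cmult mult_left_mono power2_eq_square)
  also have "\<dots> = ennreal (2 * B / (c * g ^ 2))"
    using B c g by (simp add: ennreal_mult[symmetric])
  finally show ?thesis .
qed

lemma nn_integral_unit_interval_le_laplace:
  fixes u :: "real \<Rightarrow> real"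
  assumes u_cont: "continuous_on {0..} u"
    and u_nonneg: "\<And>t. 0 \<le> t \<Longrightarrow> 0 \<le> u t" and u_le: "\<And>t. 0 \<le> t \<Longrightarrow> u t \<le> B" and l: "l > 0"
  shows "(\<integral>\<^sup>+s. ennreal (u (s / l)) * indicator {0..1} s \<partial>lborel)
    \<le> ennreal (exp 1 * l * (LBINT t:{0..}. exp (- (l * t)) * u t))"
proof -
  define w where "w t = indicator {0..} t *\<^sub>R (exp (- (l * t)) * u t)" for t
  have [measurable]: "w \<in> borel_measurable borel"
    unfolding w_def by (intro borel_measurable_continuous_on_indicator continuous_intros u_cont) auto
  have B: "B \<ge> 0" using u_nonneg[of 0] u_le[of 0] by simp
  have w_nonneg: "0 \<le> w t" for t using u_nonneg[of t] by (simp add: w_def split: split_indicator)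
  have I: "0 \<le> (LBINT t:{0..}. exp (- (l * t)) * u t)"
    unfolding set_lebesgue_integral_def w_def[symmetric] using w_nonneg by (simp add: integral_nonneg)
  have w_int: "integrable lborel w"
  proof (rule Bochner_Integration.integrable_bound[OF integrable_mult_right[OF integrable_exp_abs[OF l]]])
    show "AE t in lborel. norm (w t) \<le> norm (B * exp (- (l * \<bar>t\<bar>)))"
      using u_le u_nonneg B by (intro AE_I2) (auto simp: w_def abs_mult split: split_indicator)
  qed measurable
  have "(\<integral>\<^sup>+s. ennreal (u (s / l)) * indicator {0..1} s \<partial>lborel) \<le> (\<integral>\<^sup>+s. ennreal (exp 1) * ennreal (w (s / l)) \<partial>lborel)"
  proof (intro nn_integral_mono)
    fix s :: real
    show "ennreal (u (s / l)) * indicator {0..1} s \<le> ennreal (exp 1) * ennreal (w (s / l))"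
    proof (cases "s \<in> {0..1}")
      case True
      then have "1 \<le> exp 1 * exp (- s)" by (simp add: exp_add[symmetric])
      from mult_right_mono[OF this u_nonneg[of "s / l"]] have "u (s / l) \<le> exp 1 * w (s / l)"
        using True l by (simp add: w_def mult_ac)
      then show ?thesis using True w_nonneg by (simp add: ennreal_mult[symmetric] ennreal_leI)
    qed simp
  qed
  also have "\<dots> = ennreal (exp 1) * (ennreal l * (\<integral>\<^sup>+t. ennreal (w t) \<partial>lborel))"
  proof -
    have "(\<integral>\<^sup>+t. ennreal (w t) \<partial>lborel) = ennreal (1 / l) * (\<integral>\<^sup>+s. ennreal (w (s / l)) \<partial>lborel)"
      using nn_integral_real_affine[of "\<lambda>t. ennreal (w t)" "1 / l" 0] l by simp
    then have "ennreal l * (\<integral>\<^sup>+t. ennreal (w t) \<partial>lborel) = (\<integral>\<^sup>+s. ennreal (w (s / l)) \<partial>lborel)"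
      using l by (simp add: mult.assoc[symmetric] ennreal_mult[symmetric])
    then show ?thesis by (simp add: nn_integral_cmult)
  qed
  also have "(\<integral>\<^sup>+t. ennreal (w t) \<partial>lborel) = ennreal (LBINT t:{0..}. exp (- (l * t)) * u t)"
    unfolding set_lebesgue_integral_def w_def[symmetric] by (intro nn_integral_eq_integral w_int) (simp add: w_nonneg)
  also have "ennreal (exp 1) * (ennreal l * \<dots>) = ennreal (exp 1 * l * (LBINT t:{0..}. exp (- (l * t)) * u t))"
    using l I by (simp add: ennreal_mult[symmetric] mult.assoc)
  finally show ?thesis .
qed

lemma ennreal_LIMSEQ_0_of_approx:
  fixes a :: "nat \<Rightarrow> ennreal" and b :: "nat \<Rightarrow> nat \<Rightarrow> ennreal" and c :: "nat \<Rightarrow> ennreal"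
  assumes bound: "\<And>m. \<forall>\<^sub>F n in sequentially. a n \<le> b m n + c m"
    and b: "\<And>m. b m \<longlonglongrightarrow> 0" and c: "c \<longlonglongrightarrow> 0"
  shows "a \<longlonglongrightarrow> 0"
proof (rule order_tendstoI)
  fix u :: ennreal
  assume "0 < u"
  then obtain m where "c m < u"
    using order_tendstoD(2)[OF c] by (auto simp: eventually_sequentially)
  have "(\<lambda>n. b m n + c m) \<longlonglongrightarrow> 0 + c m" by (intro tendsto_add b tendsto_const)
  then have "\<forall>\<^sub>F n in sequentially. b m n + c m < u" using \<open>c m < u\<close> by (intro order_tendstoD(2)) auto
  with bound[of m] show "\<forall>\<^sub>F n in sequentially. a n < u" by eventually_elim (rule le_less_trans)
qed simp

lemma LIMSEQ_powr_div_self: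
  assumes "a < 1"
  shows "(\<lambda>n. real n powr a / real n) \<longlonglongrightarrow> 0"
proof -
  have "(\<lambda>n. real n powr (a - 1)) \<longlonglongrightarrow> 0"
    using assms by (intro tendsto_neg_powr filterlim_real_sequentially) simp
  moreover have "\<forall>\<^sub>F n in sequentially. real n powr (a - 1) = real n powr a / real n"
    using eventually_gt_at_top[of 0] by eventually_elim (simp add: powr_diff)
  ultimately show ?thesis by (rule Lim_transform_eventually)
qed

section \<open>Green function and semigroup of sticky Brownian motion\<close>

definition sticky_phi :: "real \<Rightarrow> real \<Rightarrow> real \<Rightarrow> real" where
  "sticky_phi r l z =
     (if 0 \<le> z then exp (- (sqrt (2 * l) * z))
      else exp (- (sqrt (2 * l) * z))
        + l * r / (2 * sqrt (2 * l)) * (exp (- (sqrt (2 * l) * z)) - exp (sqrt (2 * l) * z)))"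

lemma sticky_green_eq_sticky_phi:
  "sticky_green r l x y
    = sticky_phi r l (- min x y) * sticky_phi r l (max x y) / (2 * sqrt (2 * l) + l * r)"
proof -
  have "sticky_phi r l z = (if 0 \<le> z then exp (- (sqrt (2 * l) * z))
      else (1 + l * r / (2 * sqrt (2 * l))) * exp (- (sqrt (2 * l) * z))
        + - (l * r / (2 * sqrt (2 * l))) * exp (sqrt (2 * l) * z))" for z
    by (simp add: sticky_phi_def algebra_simps)
  then show ?thesis unfolding sticky_green_def Let_def by simp
qed

lemma sticky_phi_nonneg_arg: "0 \<le> z \<Longrightarrow> sticky_phi r l z = exp (- (sqrt (2 * l) * z))"
  by (simp add: sticky_phi_def)

lemma sticky_phi_bounds:
  fixes r l z :: real
  defines "g \<equiv> sqrt (2 * l)"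
  assumes "r \<ge> 0" and "l \<ge> 0"
  shows "0 < sticky_phi r l z" and "sticky_phi r l z \<le> (1 + l * r / (2 * g)) * exp (- (g * z))"
proof -
  define c where "c = l * r / (2 * g)"
  have c: "0 \<le> c" using assms by (simp add: c_def g_def)
  define d where "d = (if 0 \<le> z then 0 else c * (exp (- (g * z)) - exp (g * z)))"
  have phi: "sticky_phi r l z = exp (- (g * z)) + d" by (simp add: sticky_phi_def d_def c_def g_def)
  have "0 \<le> d"
  proof (cases "0 \<le> z")
    case False
    then have "exp (g * z) \<le> exp (- (g * z))" using \<open>l \<ge> 0\<close> by (simp add: g_def mult_nonneg_nonpos)
    then show ?thesis using False c by (simp add: d_def)
  qed (simp add: d_def)
  moreover have "d \<le> c * exp (- (g * z))"
    using c by (simp add: d_def right_diff_distrib)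
  ultimately show "0 < sticky_phi r l z" and "sticky_phi r l z \<le> (1 + l * r / (2 * g)) * exp (- (g * z))"
    unfolding phi c_def[symmetric] by (simp_all add: add_pos_nonneg distrib_right)
qed

lemma sticky_green_bounds:
  fixes r l x y :: real
  defines "g \<equiv> sqrt (2 * l)"
  assumes r: "r > 0" and l: "l > 0"
  shows "0 \<le> sticky_green r l x y"
    and "sticky_green r l x y \<le> exp (- (g * \<bar>x - y\<bar>)) / (2 * g)"
    and "sticky_green r l x 0 = exp (- (g * \<bar>x\<bar>)) / (2 * g + l * r)"
proof -
  define A where "A = 1 + l * r / (2 * g)"
  have g: "g > 0" using l by (simp add: g_def)
  have A: "A \<ge> 1" and W: "2 * g + l * r = 2 * g * A" using g l r by (simp_all add: A_def field_simps)
  note G = sticky_green_eq_sticky_phi[of r l, folded g_def]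
  note phi = sticky_phi_bounds[of r l, folded g_def]
  note phi_exp = sticky_phi_nonneg_arg[of _ r l, folded g_def]
  show "0 \<le> sticky_green r l x y"
    unfolding G using phi(1) r l g by (simp add: less_imp_le)
  show "sticky_green r l x 0 = exp (- (g * \<bar>x\<bar>)) / (2 * g + l * r)"
    unfolding G by (cases "0 \<le> x") (simp_all add: phi_exp)
  have "\<bar>x - y\<bar> = max x y - min x y" by auto
  then have dist: "exp (g * min x y) * exp (- (g * max x y)) = exp (- (g * \<bar>x - y\<bar>))"
    by (simp add: exp_add[symmetric] right_diff_distrib)
  have "sticky_phi r l (- min x y) * sticky_phi r l (max x y) \<le> A * exp (- (g * \<bar>x - y\<bar>))"
  proof (cases "0 \<le> max x y")
    case True
    then show ?thesis
      using mult_right_mono[OF phi(2)[of "- min x y"], of "exp (- (g * max x y))"] r l dist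
      by (simp add: phi_exp mult.assoc A_def)
  next
    case False
    then have "sticky_phi r l (- min x y) = exp (g * min x y)" by (simp add: phi_exp)
    moreover have "exp (g * min x y) * sticky_phi r l (max x y) \<le> exp (g * min x y) * (A * exp (- (g * max x y)))"
      using phi(2)[of "max x y"] r l by (simp add: A_def)
    ultimately show ?thesis using dist by (simp add: mult.left_commute)
  qed
  then show "sticky_green r l x y \<le> exp (- (g * \<bar>x - y\<bar>)) / (2 * g)"
    unfolding G W using g A by (simp add: field_simps)
qed

lemma borel_measurable_sticky_green [measurable]: "sticky_green r l x \<in> borel_measurable borel"
  unfolding sticky_green_def Let_def by measurable

lemma sticky_kernelsD:
  assumes "sticky_kernels K" and "r > 0"
  shows "t \<ge> 0 \<Longrightarrow> prob_space (K r t x)"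
    and "t \<ge> 0 \<Longrightarrow> sets (K r t x) = sets borel"
    and "continuous_on UNIV h \<Longrightarrow> bounded (range h) \<Longrightarrow> continuous_on {0..} (\<lambda>t. sticky_P K r t h x)"
    and "continuous_on UNIV h \<Longrightarrow> bounded (range h) \<Longrightarrow> l > 0 \<Longrightarrow>
      (LBINT t:{0..}. exp (- (l * t)) * sticky_P K r t h x)
        = 2 * (LBINT y. sticky_green r l x y * h y) + r * sticky_green r l x 0 * h 0"
  using assms unfolding sticky_kernels_def sticky_P_def by simp_all

lemma sticky_P_bounds:
  assumes K: "sticky_kernels K" and r: "r > 0" and t: "t \<ge> 0"
    and f: "f \<in> borel_measurable borel" "\<And>y. 0 \<le> f y" "\<And>y. f y \<le> B"
  shows "0 \<le> sticky_P K r t f x" and "sticky_P K r t f x \<le> B"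
proof -
  interpret prob_space "K r t x" using sticky_kernelsD(1)[OF K r t] .
  have [measurable]: "f \<in> borel_measurable (K r t x)"
    using f(1) measurable_cong_sets[OF sticky_kernelsD(2)[OF K r t] refl] by blast
  show "0 \<le> sticky_P K r t f x" unfolding sticky_P_def using f(2) by simp
  have "integrable (K r t x) f"
    using f by (intro integrable_const_bound[where B=B]) auto
  then have "(\<integral>y. f y \<partial>K r t x) \<le> (\<integral>y. B \<partial>K r t x)"
    using f(3) by (intro integral_mono) auto
  then show "sticky_P K r t f x \<le> B" by (simp add: sticky_P_def prob_space)
qed

lemma sticky_P_abs_diff_le:
  assumes K: "sticky_kernels K" and r: "r > 0" and t: "t \<ge> 0"
    and h: "h \<in> borel_measurable borel" "\<And>y. \<bar>h y\<bar> \<le> B"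
  shows "\<bar>sticky_P K r t h x - c\<bar> \<le> sticky_P K r t (\<lambda>y. \<bar>h y - c\<bar>) x"
proof -
  interpret prob_space "K r t x" using sticky_kernelsD(1)[OF K r t] .
  have [measurable]: "h \<in> borel_measurable (K r t x)"
    using h(1) measurable_cong_sets[OF sticky_kernelsD(2)[OF K r t] refl] by blast
  have "integrable (K r t x) h"
    using h by (intro integrable_const_bound[where B=B]) auto
  then have "sticky_P K r t h x - c = (\<integral>y. h y - c \<partial>K r t x)"
    by (simp add: sticky_P_def prob_space)
  then show ?thesis unfolding sticky_P_def by (simp add: integral_abs_bound)
qed

lemma sticky_resolvent_le:
  fixes \<phi> :: "real \<Rightarrow> real"
  assumes r: "r > 0" and l: "l > 0"
    and [measurable]: "\<phi> \<in> borel_measurable borel" and \<phi>_nonneg: "\<And>y. 0 \<le> \<phi> y"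
  defines "g \<equiv> sqrt (2 * l)"
  shows "ennreal (l * (2 * (LBINT y. sticky_green r l x y * \<phi> y) + r * sticky_green r l x 0 * \<phi> 0))
    \<le> (\<integral>\<^sup>+y. ennreal (g / 2 * exp (- (g * \<bar>x - y\<bar>)) * \<phi> y) \<partial>lborel) + ennreal (exp (- (g * \<bar>x\<bar>)) * \<phi> 0)"
proof -
  note G = sticky_green_bounds[OF r l, folded g_def]
  have g: "g > 0" and gg: "l = g\<^sup>2 / 2" using l by (simp_all add: g_def)
  define I where "I = (LBINT y. sticky_green r l x y * \<phi> y)"
  have I: "I \<ge> 0" unfolding I_def using G(1) \<phi>_nonneg by simp
  have "ennreal (2 * l * I) = ennreal (2 * l) * ennreal (norm I)"
    using l I by (simp add: ennreal_mult)
  also have "\<dots> \<le> ennreal (2 * l) * (\<integral>\<^sup>+y. norm (sticky_green r l x y * \<phi> y) \<partial>lborel)"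
    unfolding I_def by (intro mult_left_mono norm_integral_le_nn_integral_norm) simp
  also have "\<dots> = (\<integral>\<^sup>+y. ennreal (2 * l * (sticky_green r l x y * \<phi> y)) \<partial>lborel)"
    using l G(1) \<phi>_nonneg by (subst nn_integral_cmult[symmetric]) (auto simp: ennreal_mult abs_mult)
  also have "\<dots> \<le> (\<integral>\<^sup>+y. ennreal (g / 2 * exp (- (g * \<bar>x - y\<bar>)) * \<phi> y) \<partial>lborel)"
  proof (intro nn_integral_mono ennreal_leI)
    fix y
    have "2 * l * sticky_green r l x y \<le> 2 * l * (exp (- (g * \<bar>x - y\<bar>)) / (2 * g))"
      by (rule mult_left_mono[OF G(2)]) (use l in simp)
    also have "\<dots> = g / 2 * exp (- (g * \<bar>x - y\<bar>))" using g by (simp add: gg power2_eq_square)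
    finally show "2 * l * (sticky_green r l x y * \<phi> y) \<le> g / 2 * exp (- (g * \<bar>x - y\<bar>)) * \<phi> y"
      using \<phi>_nonneg[of y] by (simp add: mult_right_mono mult.assoc[symmetric])
  qed
  finally have bulk: "ennreal (2 * l * I) \<le> (\<integral>\<^sup>+y. ennreal (g / 2 * exp (- (g * \<bar>x - y\<bar>)) * \<phi> y) \<partial>lborel)" .
  have "l * (r * sticky_green r l x 0 * \<phi> 0) = l * r / (2 * g + l * r) * (exp (- (g * \<bar>x\<bar>)) * \<phi> 0)"
    by (simp add: G(3))
  also have "\<dots> \<le> exp (- (g * \<bar>x\<bar>)) * \<phi> 0"
    using g mult_pos_pos[OF l r] \<phi>_nonneg[of 0] by (intro mult_left_le_one_le) auto
  finally have sticky: "l * (r * sticky_green r l x 0 * \<phi> 0) \<le> exp (- (g * \<bar>x\<bar>)) * \<phi> 0" .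
  have "ennreal (l * (2 * I + r * sticky_green r l x 0 * \<phi> 0))
      = ennreal (2 * l * I) + ennreal (l * (r * sticky_green r l x 0 * \<phi> 0))"
    using l r I G(1) \<phi>_nonneg by (simp add: distrib_left ennreal_plus[symmetric] mult.assoc del: ennreal_plus)
  also have "\<dots> \<le> (\<integral>\<^sup>+y. ennreal (g / 2 * exp (- (g * \<bar>x - y\<bar>)) * \<phi> y) \<partial>lborel) + ennreal (exp (- (g * \<bar>x\<bar>)) * \<phi> 0)"
    using bulk sticky by (intro add_mono ennreal_leI)
  finally show ?thesis unfolding I_def .
qed

lemma sticky_time_average_deviation_le:
  fixes h :: "real \<Rightarrow> real"
  assumes K: "sticky_kernels K" and r: "r > 0" and \<tau>: "\<tau> > 0"
    and h_cont: "continuous_on UNIV h" and h_le: "\<And>y. \<bar>h y\<bar> \<le> B" and h0: "h 0 = 0"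
  defines "g \<equiv> sqrt (2 / \<tau>)"
  shows "ennreal \<bar>LBINT s=0..1. sticky_P K r (\<tau> * s) h x - h x\<bar>
    \<le> ennreal (exp 1) * ((\<integral>\<^sup>+y. ennreal (g / 2 * exp (- (g * \<bar>x - y\<bar>)) * \<bar>h y - h x\<bar>) \<partial>lborel)
      + ennreal (exp (- (g * \<bar>x\<bar>)) * \<bar>h x\<bar>))"
proof -
  define l where "l = 1 / \<tau>"
  have l: "l > 0" and g_l: "g = sqrt (2 * l)" using \<tau> by (simp_all add: l_def g_def)
  have [measurable]: "h \<in> borel_measurable borel" using h_cont by (rule borel_measurable_continuous_onI)
  define \<phi> where "\<phi> y = \<bar>h y - h x\<bar>" for y
  have \<phi>_cont: "continuous_on UNIV \<phi>" unfolding \<phi>_def by (intro continuous_intros h_cont)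
  have [measurable]: "\<phi> \<in> borel_measurable borel" using \<phi>_cont by (rule borel_measurable_continuous_onI)
  have \<phi>_le: "\<phi> y \<le> 2 * B" for y
    using h_le[of y] h_le[of x] unfolding \<phi>_def by linarith
  then have \<phi>_bounded: "bounded (range \<phi>)" by (auto simp: bounded_iff \<phi>_def)
  define u where "u t = sticky_P K r t \<phi> x" for t
  have u_bounds: "0 \<le> u t" "u t \<le> 2 * B" if "t \<ge> 0" for t
    unfolding u_def using sticky_P_bounds[OF K r that, where f=\<phi> and B="2 * B"] \<phi>_le by (auto simp: \<phi>_def)
  have deviation: "\<bar>sticky_P K r t h x - h x\<bar> \<le> u t" if "t \<ge> 0" for t
    unfolding u_def \<phi>_def using sticky_P_abs_diff_le[OF K r that _ h_le] by simp
  have "ennreal \<bar>LBINT s=0..1. sticky_P K r (\<tau> * s) h x - h x\<bar>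
      \<le> (\<integral>\<^sup>+s. norm (indicator {0..1} s *\<^sub>R (sticky_P K r (\<tau> * s) h x - h x)) \<partial>lborel)"
    using norm_integral_le_nn_integral_norm[of lborel "\<lambda>s. indicator {0..1} s *\<^sub>R (sticky_P K r (\<tau> * s) h x - h x)"]
    by (simp add: interval_integral_Icc[of 0 1, simplified] set_lebesgue_integral_def zero_ereal_def one_ereal_def)
  also have "\<dots> \<le> (\<integral>\<^sup>+s. ennreal (u (s / l)) * indicator {0..1} s \<partial>lborel)"
    using \<tau> by (intro nn_integral_mono) (auto simp: l_def mult.commute intro!: ennreal_leI deviation split: split_indicator)
  also have "\<dots> \<le> ennreal (exp 1 * l * (LBINT t:{0..}. exp (- (l * t)) * u t))"
    using u_bounds l unfolding u_def
    by (intro nn_integral_unit_interval_le_laplace sticky_kernelsD(3)[OF K r \<phi>_cont \<phi>_bounded]) auto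
  also have "\<dots> = ennreal (exp 1) * ennreal (l * (2 * (LBINT y. sticky_green r l x y * \<phi> y) + r * sticky_green r l x 0 * \<phi> 0))"
    unfolding u_def using sticky_kernelsD(4)[OF K r \<phi>_cont \<phi>_bounded l] l
    by (simp add: ennreal_mult' mult.assoc)
  also have "\<dots> \<le> ennreal (exp 1) * ((\<integral>\<^sup>+y. ennreal (g / 2 * exp (- (g * \<bar>x - y\<bar>)) * \<phi> y) \<partial>lborel)
      + ennreal (exp (- (g * \<bar>x\<bar>)) * \<phi> 0))"
    unfolding g_l by (intro mult_left_mono sticky_resolvent_le r l) (auto simp: \<phi>_def)
  finally show ?thesis using h0 by (simp add: \<phi>_def)
qed

section \<open>Rescaled time averages\<close>

lemma nn_integral_sticky_time_average_le:
  fixes h :: "real \<Rightarrow> real"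
  assumes K: "sticky_kernels K" and r: "r > 0" and \<tau>: "\<tau> > 0"
    and h_lip: "L-lipschitz_on UNIV h" and h_le: "\<And>x. \<bar>h x\<bar> \<le> B"
    and h_zero: "\<And>x. \<bar>x\<bar> < c \<Longrightarrow> h x = 0" and c: "c > 0"
    and h_L1: "(\<integral>\<^sup>+x. ennreal \<bar>h x\<bar> \<partial>lborel) \<le> ennreal M" and M: "M \<ge> 0" and R: "R > 0"
  shows "(\<integral>\<^sup>+x. ennreal \<bar>LBINT s=0..1. sticky_P K r (\<tau> * s) h x - h x\<bar> \<partial>lborel)
    \<le> ennreal (exp 1) * (ennreal ((2 * R * L + 4 * M / R) * sqrt (\<tau> / 2) + B * \<tau> / c) + 2 * L1_tail h (R / 2))"
proof -
  define g where "g = sqrt (2 / \<tau>)"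
  define A where "A = 2 * R * L + 4 * M / R"
  have g: "g > 0" using \<tau> by (simp add: g_def)
  have h_cont: "continuous_on UNIV h" using h_lip by (rule lipschitz_on_continuous_on)
  have [measurable]: "h \<in> borel_measurable borel" using h_cont by (rule borel_measurable_continuous_onI)
  have A: "A \<ge> 0" unfolding A_def using R M lipschitz_on_nonneg[OF h_lip] by simp
  have B: "B \<ge> 0" using h_le[of 0] by simp
  have "g ^ 2 = 2 / \<tau>" using \<tau> by (simp add: g_def)
  then have "1 / g = sqrt (\<tau> / 2)" and "2 / (c * g ^ 2) = \<tau> / c"
    using \<tau> c by (simp_all add: g_def real_sqrt_divide)
  then have scale: "A * sqrt (\<tau> / 2) + B * \<tau> / c = A / g + 2 * B / (c * g ^ 2)"
    by (metis (no_types, lifting) mult.commute times_divide_eq_right divide_divide_eq_left mult_1_right)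
  have "(\<integral>\<^sup>+x. ennreal \<bar>LBINT s=0..1. sticky_P K r (\<tau> * s) h x - h x\<bar> \<partial>lborel)
      \<le> (\<integral>\<^sup>+x. ennreal (exp 1) * ((\<integral>\<^sup>+y. ennreal (g / 2 * exp (- (g * \<bar>x - y\<bar>)) * \<bar>h y - h x\<bar>) \<partial>lborel)
          + ennreal (exp (- (g * \<bar>x\<bar>)) * \<bar>h x\<bar>)) \<partial>lborel)"
    using h_zero[of 0] c unfolding g_def
    by (intro nn_integral_mono sticky_time_average_deviation_le[OF K r \<tau> h_cont h_le]) simp
  also have "\<dots> = ennreal (exp 1) * ((\<integral>\<^sup>+x. \<integral>\<^sup>+y. ennreal (g / 2 * exp (- (g * \<bar>x - y\<bar>)) * \<bar>h y - h x\<bar>) \<partial>lborel \<partial>lborel)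
      + (\<integral>\<^sup>+x. ennreal (exp (- (g * \<bar>x\<bar>)) * \<bar>h x\<bar>) \<partial>lborel))"
    by (simp add: nn_integral_cmult nn_integral_add)
  also have "\<dots> \<le> ennreal (exp 1) * ((ennreal (A / g) + 2 * L1_tail h (R / 2)) + ennreal (2 * B / (c * g ^ 2)))"
    unfolding A_def using A R M g
    by (intro mult_left_mono add_mono nn_integral_laplace_smoothing_diff_le nn_integral_shift_diff_le
        nn_integral_exp_abs_mult_le h_lip h_L1 h_le h_zero c) (auto simp: A_def)
  also have "\<dots> = ennreal (exp 1) * (ennreal (A * sqrt (\<tau> / 2) + B * \<tau> / c) + 2 * L1_tail h (R / 2))"
  proof -
    have "0 \<le> A / g" and "0 \<le> 2 * B / (c * g ^ 2)" using A B c g by simp_all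
    then show ?thesis unfolding scale by (simp only: ennreal_plus add_ac)
  qed
  finally show ?thesis unfolding A_def .
qed

lemma nn_integral_sticky_time_average_comp_le:
  fixes k S S' :: "real \<Rightarrow> real"
  assumes K: "sticky_kernels K" and r: "r > 0" and \<tau>: "\<tau> > 0"
    and S: "\<And>x. (S has_real_derivative S' x) (at x)" and S'_cont: "continuous_on UNIV S'"
    and S'_bounds: "\<And>x. e \<le> S' x \<and> S' x \<le> 1 / e" and e: "e > 0" and S0: "S 0 = 0"
    and k_lip: "L-lipschitz_on UNIV k" and k_le: "\<And>u. \<bar>k u\<bar> \<le> B" and k_int: "integrable lborel k"
    and k_zero: "\<And>u. \<bar>u\<bar> < \<delta> \<Longrightarrow> k u = 0" and \<delta>: "\<delta> > 0" and R: "R > 0"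
  defines "M \<equiv> LINT u|lborel. \<bar>k u\<bar>"
  shows "(\<integral>\<^sup>+x. ennreal \<bar>LBINT s=0..1. sticky_P K r (\<tau> * s) (\<lambda>x. k (S x)) x - k (S x)\<bar> \<partial>lborel)
    \<le> ennreal (exp 1) * (ennreal ((2 * R * (L / e) + 4 * (M / e) / R) * sqrt (\<tau> / 2) + B * \<tau> / (e * \<delta>))
      + 2 * (ennreal (1 / e) * L1_tail k (e * (R / 2))))"
proof -
  have [measurable]: "k \<in> borel_measurable borel"
    using k_lip by (intro borel_measurable_continuous_onI lipschitz_on_continuous_on)
  have S_diff: "\<bar>S y - S x\<bar> \<le> 1 / e * \<bar>y - x\<bar>" for x y
    using S'_bounds e by (intro DERIV_abs_le_imp_abs_diff_le[OF S]) (smt (verit))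
  have "(L * (1 / e))-lipschitz_on UNIV (\<lambda>x. k (S x))"
    using S_diff e by (intro lipschitz_on_compose2[OF _ lipschitz_on_subset[OF k_lip]] lipschitz_onI)
      (auto simp: dist_real_def)
  then have h_lip: "(L / e)-lipschitz_on UNIV (\<lambda>x. k (S x))" by simp
  have h_zero: "k (S x) = 0" if "\<bar>x\<bar> < e * \<delta>" for x
  proof (rule k_zero)
    have "\<bar>S x\<bar> \<le> 1 / e * \<bar>x\<bar>" using S_diff[of x 0] S0 by simp
    also have "\<dots> < \<delta>" using that e by (simp add: field_simps)
    finally show "\<bar>S x\<bar> < \<delta>" .
  qed
  have M: "M \<ge> 0" unfolding M_def by simp
  have "(\<integral>\<^sup>+x. ennreal \<bar>k (S x)\<bar> \<partial>lborel) \<le> ennreal (1 / e) * (\<integral>\<^sup>+u. ennreal \<bar>k u\<bar> \<partial>lborel)"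
    using S'_bounds e by (intro nn_integral_comp_le_of_DERIV_ge[OF S S'_cont]) auto
  also have "(\<integral>\<^sup>+u. ennreal \<bar>k u\<bar> \<partial>lborel) = ennreal M"
    unfolding M_def by (intro nn_integral_eq_integral integrable_abs k_int) auto
  finally have h_L1: "(\<integral>\<^sup>+x. ennreal \<bar>k (S x)\<bar> \<partial>lborel) \<le> ennreal (M / e)"
    using e by (simp add: ennreal_mult[symmetric] M_def)
  have "(\<integral>\<^sup>+x. ennreal \<bar>LBINT s=0..1. sticky_P K r (\<tau> * s) (\<lambda>x. k (S x)) x - k (S x)\<bar> \<partial>lborel)
      \<le> ennreal (exp 1) * (ennreal ((2 * R * (L / e) + 4 * (M / e) / R) * sqrt (\<tau> / 2) + B * \<tau> / (e * \<delta>))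
        + 2 * L1_tail (\<lambda>x. k (S x)) (R / 2))"
    using e \<delta> M by (intro nn_integral_sticky_time_average_le[OF K r \<tau> h_lip k_le h_zero _ h_L1 _ R]) simp_all
  also have "\<dots> \<le> ennreal (exp 1) * (ennreal ((2 * R * (L / e) + 4 * (M / e) / R) * sqrt (\<tau> / 2) + B * \<tau> / (e * \<delta>))
        + 2 * (ennreal (1 / e) * L1_tail k (e * (R / 2))))"
    using S'_bounds e S0 by (intro add_mono mult_left_mono L1_tail_comp_le[OF S S'_cont]) auto
  finally show ?thesis .
qed

lemma T_op_L1_le:
  fixes \<rho> \<alpha> \<epsilon> :: real and T T' T'' k :: "real \<Rightarrow> real"
  assumes K: "sticky_kernels K" and \<rho>: "\<rho> > 0" and \<epsilon>: "\<epsilon> > 0" and n: "n \<ge> 1"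
    and T1: "\<forall>x. (T has_real_derivative T' x) (at x)"
    and T2: "\<forall>x. (T' has_real_derivative T'' x) (at x)"
    and T0: "T 0 = 0" and T'_bounds: "\<forall>x. \<epsilon> \<le> T' x \<and> T' x \<le> 1 / \<epsilon>"
    and k_lip: "L-lipschitz_on UNIV k" and k_le: "\<And>u. \<bar>k u\<bar> \<le> B" and k_int: "integrable lborel k"
    and k_zero: "\<And>u. \<bar>u\<bar> < \<delta> \<Longrightarrow> k u = 0" and \<delta>: "\<delta> > 0" and R: "R > 0"
  defines "\<tau> \<equiv> real n powr (2 * \<alpha>) / real n"
  shows "(\<integral>\<^sup>+y. ennreal \<bar>T_op K \<rho> \<alpha> n (\<lambda>x. k (real n powr \<alpha> * T (x / real n powr \<alpha>))) y\<bar> \<partial>lborel)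
    \<le> ennreal (exp 1) * (ennreal ((2 * R * (L / \<epsilon>) + 4 * ((LINT u|lborel. \<bar>k u\<bar>) / \<epsilon>) / R) * sqrt (\<tau> / 2)
        + B * \<tau> / (\<epsilon> * \<delta>)) + 2 * (ennreal (1 / \<epsilon>) * L1_tail k (\<epsilon> * (R / 2))))"
proof -
  define a where "a = real n powr \<alpha>"
  have a: "a > 0" and \<tau>: "\<tau> > 0" using n by (simp_all add: a_def \<tau>_def)
  have T_op_eq: "T_op K \<rho> \<alpha> n h y = (LBINT s=0..1. sticky_P K (a * \<rho>) (\<tau> * s) h y - h y)" for h y
    unfolding T_op_def a_def \<tau>_def by (simp add: mult.commute)
  have S: "((\<lambda>x. a * T (x / a)) has_real_derivative T' (x / a)) (at x)" for x
  proof -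
    have "((\<lambda>x. a * T (x / a)) has_real_derivative a * (T' (x / a) * (1 / a))) (at x)"
      using a by (intro DERIV_cmult DERIV_chain2[OF T1[rule_format]] derivative_eq_intros) auto
    then show ?thesis using a by simp
  qed
  have "continuous_on UNIV T'" using T2 by (intro has_real_derivative_imp_continuous_on) auto
  then have S'_cont: "continuous_on UNIV (\<lambda>x. T' (x / a))"
    by (rule continuous_on_compose2) (use a in \<open>auto intro!: continuous_intros\<close>)
  show ?thesis unfolding T_op_eq a_def[symmetric]
    using T'_bounds T0 a \<rho> \<epsilon>
    by (intro nn_integral_sticky_time_average_comp_le[OF K _ \<tau> S S'_cont _ _ _ k_lip k_le k_int k_zero \<delta> R]) auto
qed

theorem lemma3p4:
  fixes \<rho> \<alpha> \<epsilon> :: real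
    and T T' T'' k :: "real \<Rightarrow> real"
    and K :: "real \<Rightarrow> real \<Rightarrow> real \<Rightarrow> real measure"
  assumes K: "sticky_kernels K"
    and rho: "\<rho> > 0" and alpha: "0 < \<alpha>" "\<alpha> < 1/2"
    and eps: "\<epsilon> > 0"
    and T1: "\<forall>x. (T has_real_derivative T' x) (at x)"
    and T2: "\<forall>x. (T' has_real_derivative T'' x) (at x)"
    and T0: "T 0 = 0" "T' 0 = 1"
    and Tb: "\<forall>x. \<epsilon> \<le> T' x \<and> T' x \<le> 1 / \<epsilon>" "\<forall>x. \<bar>T'' x\<bar> \<le> 1 / \<epsilon>"
    and kb: "bounded (range k)" and ki: "integrable lborel k"
    and kl: "\<exists>L. L-lipschitz_on UNIV k"
    and k0: "\<exists>\<delta>>0. \<forall>x. \<bar>x\<bar> < \<delta> \<longrightarrow> k x = 0"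
  shows "(\<lambda>n::nat. \<integral>\<^sup>+ y. ennreal \<bar>T_op K \<rho> \<alpha> n
            (\<lambda>x. k (real n powr \<alpha> * T (x / real n powr \<alpha>))) y\<bar> \<partial>lborel)
         \<longlonglongrightarrow> 0"
proof -
  obtain L where k_lip: "L-lipschitz_on UNIV k" using kl by blast
  obtain \<delta> where \<delta>: "\<delta> > 0" and k_zero: "\<And>u. \<bar>u\<bar> < \<delta> \<Longrightarrow> k u = 0" using k0 by blast
  obtain B where k_le: "\<And>u. \<bar>k u\<bar> \<le> B" using kb by (auto simp: bounded_iff)
  define \<tau> where "\<tau> n = real n powr (2 * \<alpha>) / real n" for n :: nat
  define R where "R m = 2 * real (Suc m) / \<epsilon>" for m :: nat
  define b where "b m n = ennreal (exp 1) * ennreal ((2 * R m * (L / \<epsilon>) + 4 * ((LINT u|lborel. \<bar>k u\<bar>) / \<epsilon>) / R m)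
    * sqrt (\<tau> n / 2) + B * \<tau> n / (\<epsilon> * \<delta>))" for m n
  define c where "c m = ennreal (exp 1) * (2 * (ennreal (1 / \<epsilon>) * L1_tail k (real (Suc m))))" for m
  have R_scale: "real (Suc m) = \<epsilon> * (R m / 2)" and R: "R m > 0" for m using eps by (simp_all add: R_def)
  have bound: "\<forall>\<^sub>F n in sequentially. (\<integral>\<^sup>+y. ennreal \<bar>T_op K \<rho> \<alpha> n
      (\<lambda>x. k (real n powr \<alpha> * T (x / real n powr \<alpha>))) y\<bar> \<partial>lborel) \<le> b m n + c m" for m
    using eventually_ge_at_top[of 1]
  proof eventually_elim
    case (elim n)
    show ?case unfolding b_def c_def \<tau>_def R_scale distrib_left[symmetric]
      by (rule T_op_L1_le[OF K rho eps elim T1 T2 T0(1) Tb(1) k_lip k_le ki k_zero \<delta> R])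
  qed
  have "\<tau> \<longlonglongrightarrow> 0" unfolding \<tau>_def using alpha by (intro LIMSEQ_powr_div_self) simp
  then have "b m \<longlonglongrightarrow> ennreal (exp 1) * ennreal ((2 * R m * (L / \<epsilon>) + 4 * ((LINT u|lborel. \<bar>k u\<bar>) / \<epsilon>) / R m)
    * sqrt (0 / 2) + B * 0 / (\<epsilon> * \<delta>))" for m
    unfolding b_def using eps \<delta> by (intro tendsto_intros) auto
  moreover have "c \<longlonglongrightarrow> ennreal (exp 1) * (2 * (ennreal (1 / \<epsilon>) * 0))"
    unfolding c_def using L1_tail_tendsto_0[OF ki] by (intro tendsto_intros LIMSEQ_Suc) auto
  ultimately show ?thesis by (intro ennreal_LIMSEQ_0_of_approx[OF bound]) simp_all
qed

end
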